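(* Let $0<q<1$ and $\Sigma\sim\mathrm{Mallows}(\mathbb{Z},q)$. Almost surely, $\Sigma$ has no cycles of infinite length (i.e., every orbit $\{\Sigma^{(k)}(i):k\in\mathbb{Z}\}$, $i\in\mathbb{Z}$, is finite).
   Context: For a finite set $A\subseteq\mathbb{Z}$ and a bijection $\pi:A\to A$, $\mathrm{inv}(\pi)$ is the number of pairs $i<j$ in $A$ with $\pi(i)>\pi(j)$, and $\Pi_A\sim\mathrm{Mallows}(A,q)$ means $\mathbb{P}(\Pi_A=\pi)\propto q^{\mathrm{inv}(\pi)}$ over bijections $\pi$ of $A$. For a bijection $\sigma$ of a set $B\subseteq\mathbb{Z}$ and finite $A\subseteq B$, the pattern $\sigma_A:A\to A$ is defined by $\sigma_A(a)=a_{(i)}$ when $\sigma(a)$ is the $i$-th smallest element of $\sigma[A]$, where $a_{(i)}$ is the $i$-th smallest element of $A$. For $0<q<1$, $\mathrm{Mallows}(\mathbb{Z},q)$ is Gnedin and Olshanski's bi-infinite Mallows measure: the law of a random bijection $\Sigma$ of $\mathbb{Z}$ such that $\Sigma_I\sim\mathrm{Mallows}(I,q)$ for every finite interval of integers $I$, and, with $I_n=\{-n,\dots,n\}$, almost surely for every $i\in\mathbb{Z}$ one has $\Sigma_{I_n}(i)=\Sigma(i)$ for all sufficiently large $n$. *)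

theory Defs
  imports "HOL-Probability.Probability" "HOL-Combinatorics.Permutations"
begin

definition inversions :: "int set \<Rightarrow> (int \<Rightarrow> int) \<Rightarrow> nat" where
  "inversions A \<pi> = card {(i, j). i \<in> A \<and> j \<in> A \<and> i < j \<and> \<pi> i > \<pi> j}"

text \<open>Pattern sigma_A of \<sigma> on a finite set A: sigma_A(a) is the i-th smallest
  element of A (0-based) when \<sigma>(a) is the i-th smallest element of \<sigma>[A];
  outside A it is the identity (so that sigma_A permutes A).\<close>
definition pattern :: "(int \<Rightarrow> int) \<Rightarrow> int set \<Rightarrow> int \<Rightarrow> int" where
  "pattern \<sigma> A a =
     (if a \<in> A then sorted_list_of_set A ! card {b \<in> \<sigma> ` A. b < \<sigma> a} else a)"

definition mallows_prob :: "real \<Rightarrow> int set \<Rightarrow> (int \<Rightarrow> int) \<Rightarrow> real" where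
  "mallows_prob q A \<pi> =
     q ^ inversions A \<pi> / (\<Sum>p\<in>{p. p permutes A}. q ^ inversions A p)"

definition mallows_Z :: "real \<Rightarrow> (int \<Rightarrow> int) measure \<Rightarrow> bool" where
  "mallows_Z q P \<longleftrightarrow>
     prob_space P \<and>
     sets P = sets (PiM UNIV (\<lambda>_. count_space (UNIV :: int set))) \<and>
     (AE \<sigma> in P. bij \<sigma>) \<and>
     (\<forall>a b :: int. \<forall>\<pi>. \<pi> permutes {a..b} \<longrightarrow>
        measure P {\<sigma> \<in> space P. pattern \<sigma> {a..b} = \<pi>} = mallows_prob q {a..b} \<pi>) \<and>
     (AE \<sigma> in P. \<forall>i. \<exists>N::nat. \<forall>n\<ge>N.
        pattern \<sigma> {- int n..int n} i = \<sigma> i)"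

definition orbit_Z :: "(int \<Rightarrow> int) \<Rightarrow> int \<Rightarrow> int set" where
  "orbit_Z \<sigma> i = {(\<sigma> ^^ n) i | n. True} \<union> {(inv \<sigma> ^^ n) i | n. True}"

end

theory Submission
  imports Defs
begin

text \<open>Under Mallows(q) on an interval, the Lehmer code of the permutation has independent
  coordinates with geometric tails. A position \<open>s\<close> is a cut (positions below \<open>s\<close> are mapped
  below \<open>s\<close>) unless the code at some \<open>j \<ge> s\<close> exceeds \<open>j - s\<close>; splitting a window into blocks
  shows that, uniformly in the interval, a long window contains a cut with probability close
  to 1. Cuts on both sides of \<open>i\<close> enclose an invariant interval, so almost surely the patterns of
  \<open>\<Sigma>\<close> on \<open>[-n, n]\<close> have an invariant interval of some fixed radius around \<open>i\<close> for infinitely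
  many \<open>n\<close>. For large \<open>n\<close> these patterns agree with \<open>\<Sigma>\<close> near \<open>i\<close>, so \<open>\<Sigma>\<close> itself maps an
  interval containing \<open>i\<close> into itself and the orbit of \<open>i\<close> is finite.\<close>

subsection \<open>Lehmer codes\<close>

lemma permutes_image_Collect:
  "\<pi> permutes A \<Longrightarrow> \<pi> ` {y\<in>A. P (\<pi> y)} = {w\<in>A. P w}"
  using Compr_image_eq[of \<pi> A P] permutes_image[of \<pi> A] by blast

lemma card_less_permutes_interval:
  assumes p: "\<pi> permutes {a..b::int}" and v: "v \<in> {a..b}"
  shows "card {y\<in>{a..b}. \<pi> y < v} = nat (v - a)"
proof -
  have "card {y\<in>{a..b}. \<pi> y < v} = card (\<pi> ` {y\<in>{a..b}. \<pi> y < v})"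
    using permutes_inj[OF p] by (metis card_image inj_on_subset subset_UNIV)
  also have "\<dots> = card {w\<in>{a..b}. w < v}"
    using permutes_image_Collect[OF p, of "\<lambda>w. w < v"] by simp
  also have "{w\<in>{a..b}. w < v} = {a..v - 1}"
    using v by auto
  finally show ?thesis by simp
qed

lemma permutes_interval_eq_rank:
  assumes p: "\<pi> permutes {a..b::int}" and x: "x \<in> {a..b}"
  shows "\<pi> x = a + int (card {y\<in>{a..b}. \<pi> y < \<pi> x})"
proof -
  have "\<pi> x \<in> {a..b}"
    using permutes_in_image[OF p] x by blast
  then show ?thesis
    using card_less_permutes_interval[OF p] by simp
qed

definition lehmer_code :: "int set \<Rightarrow> (int \<Rightarrow> int) \<Rightarrow> int \<Rightarrow> nat" where
  "lehmer_code A \<pi> = restrict (\<lambda>j. card {i\<in>A. i < j \<and> \<pi> j < \<pi> i}) A"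

definition lehmer_codes :: "int \<Rightarrow> int \<Rightarrow> (int \<Rightarrow> nat) set" where
  "lehmer_codes a b = PiE {a..b} (\<lambda>j. {0..nat (j - a)})"

lemma lehmer_code_in_lehmer_codes:
  assumes "\<pi> permutes {a..b}"
  shows "lehmer_code {a..b} \<pi> \<in> lehmer_codes a b"
proof -
  have "card {i\<in>{a..b}. i < j \<and> \<pi> j < \<pi> i} \<le> card {a..<j}" for j
    by (rule card_mono) auto
  then show ?thesis
    unfolding lehmer_code_def lehmer_codes_def by auto
qed

lemma inversions_eq_sum_lehmer_code:
  assumes "finite A"
  shows "inversions A \<pi> = (\<Sum>j\<in>A. lehmer_code A \<pi> j)"
proof -
  have "{(i, j). i \<in> A \<and> j \<in> A \<and> i < j \<and> \<pi> i > \<pi> j} =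
        prod.swap ` (SIGMA j:A. {i\<in>A. i < j \<and> \<pi> j < \<pi> i})"
    by force
  then have "inversions A \<pi> = card (SIGMA j:A. {i\<in>A. i < j \<and> \<pi> j < \<pi> i})"
    unfolding inversions_def by (simp add: card_image)
  also have "\<dots> = (\<Sum>j\<in>A. card {i\<in>A. i < j \<and> \<pi> j < \<pi> i})"
    using assms by simp
  finally show ?thesis
    unfolding lehmer_code_def by simp
qed

text \<open>The positions before \<open>j\<close> carrying larger values form an up-set of the relative order
  of \<open>\<pi>\<close> on those positions; the code fixes its size, so two permutations that order the
  positions before \<open>j\<close> alike and share the code at \<open>j\<close> also place \<open>j\<close> alike.\<close>
lemma lehmer_code_extends_order:
  assumes p: "\<pi> permutes {a..b}" and p': "\<pi>' permutes {a..b}"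
    and code: "lehmer_code {a..b} \<pi> j = lehmer_code {a..b} \<pi>' j" and j: "j \<in> {a..b}"
    and ord: "\<And>u w. u \<in> {a..b} \<Longrightarrow> w \<in> {a..b} \<Longrightarrow> u < j \<Longrightarrow> w < j \<Longrightarrow>
                 \<pi> u < \<pi> w \<longleftrightarrow> \<pi>' u < \<pi>' w"
    and x: "x \<in> {a..b}" "x < j"
  shows "\<pi> j < \<pi> x \<longleftrightarrow> \<pi>' j < \<pi>' x"
proof -
  define U where "U = {i\<in>{a..b}. i < j \<and> \<pi> j < \<pi> i}"
  define V where "V = {i\<in>{a..b}. i < j \<and> \<pi>' j < \<pi>' i}"
  have "U \<subseteq> V \<or> V \<subseteq> U"
  proof (rule ccontr)
    assume "\<not> (U \<subseteq> V \<or> V \<subseteq> U)"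
    then obtain u w where uw: "u \<in> U" "u \<notin> V" "w \<in> V" "w \<notin> U"
      by blast
    then have "\<pi> u \<noteq> \<pi> w"
      using permutes_inj[OF p] by (metis injD)
    then consider "\<pi> u < \<pi> w" | "\<pi> w < \<pi> u"
      by linarith
    then show False
    proof cases
      case 1
      then show False using uw by (auto simp: U_def V_def)
    next
      case 2
      then have "\<pi>' w < \<pi>' u"
        using ord uw by (auto simp: U_def V_def)
      then show False using uw by (auto simp: U_def V_def)
    qed
  qed
  moreover have "card U = card V"
    using code j by (simp add: lehmer_code_def U_def V_def)
  moreover have "finite U" "finite V"
    by (rule finite_subset[of _ "{a..b}"], auto simp: U_def V_def)+
  ultimately have "U = V"
    by (metis card_subset_eq)
  then show ?thesis
    using x by (auto simp: U_def V_def)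
qed

lemma lehmer_code_determines_order:
  assumes p: "\<pi> permutes {a..b}" and p': "\<pi>' permutes {a..b}"
    and code: "lehmer_code {a..b} \<pi> = lehmer_code {a..b} \<pi>'"
    and x: "x \<in> {a..b}" and y: "y \<in> {a..b}"
  shows "\<pi> x < \<pi> y \<longleftrightarrow> \<pi>' x < \<pi>' y"
proof -
  have "\<forall>x\<in>{a..b}. \<forall>y\<in>{a..b}. x < a + int n \<longrightarrow> y < a + int n \<longrightarrow>
          (\<pi> x < \<pi> y \<longleftrightarrow> \<pi>' x < \<pi>' y)" for n
  proof (induction n)
    case 0
    show ?case by auto
  next
    case (Suc n)
    define j where "j = a + int n"
    have step: "\<pi> j < \<pi> z \<longleftrightarrow> \<pi>' j < \<pi>' z"
      if "z \<in> {a..b}" "z < j" "j \<in> {a..b}" for z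
      using lehmer_code_extends_order[OF p p' _ _ _ that(1,2)] Suc.IH code that(3)
      unfolding j_def by auto
    show ?case
    proof (intro ballI impI)
      fix x y assume xy: "x \<in> {a..b}" "y \<in> {a..b}" "x < a + int (Suc n)" "y < a + int (Suc n)"
      have inj: "\<pi> x = \<pi> y \<longleftrightarrow> x = y" "\<pi>' x = \<pi>' y \<longleftrightarrow> x = y"
        using permutes_inj[OF p] permutes_inj[OF p'] by (auto dest: injD)
      consider "x < j" "y < j" | "x = y" | "x = j" "y < j" | "y = j" "x < j"
        using xy unfolding j_def by linarith
      then show "\<pi> x < \<pi> y \<longleftrightarrow> \<pi>' x < \<pi>' y"
      proof cases
        case 1
        then show ?thesis using Suc.IH xy unfolding j_def by blast
      next
        case 2
        then show ?thesis by simp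
      next
        case 3
        then show ?thesis using step xy by blast
      next
        case 4
        then show ?thesis using step[of x] xy inj by force
      qed
    qed
  qed
  from this[of "nat (b - a + 1)"] x y show ?thesis
    by auto
qed

lemma inj_on_lehmer_code: "inj_on (lehmer_code {a..b}) {\<pi>. \<pi> permutes {a..b}}"
proof (rule inj_onI)
  fix \<pi> \<pi>' assume "\<pi> \<in> {\<pi>. \<pi> permutes {a..b}}" "\<pi>' \<in> {\<pi>. \<pi> permutes {a..b}}"
    and code: "lehmer_code {a..b} \<pi> = lehmer_code {a..b} \<pi>'"
  then have p: "\<pi> permutes {a..b}" and p': "\<pi>' permutes {a..b}"
    by auto
  show "\<pi> = \<pi>'"
  proof
    fix x
    show "\<pi> x = \<pi>' x"
    proof (cases "x \<in> {a..b}")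
      case True
      then have "{y\<in>{a..b}. \<pi> y < \<pi> x} = {y\<in>{a..b}. \<pi>' y < \<pi>' x}"
        using lehmer_code_determines_order[OF p p' code] by blast
      then show ?thesis
        using permutes_interval_eq_rank[OF p True] permutes_interval_eq_rank[OF p' True] by simp
    next
      case False
      then show ?thesis
        using p p' by (simp add: permutes_not_in)
    qed
  qed
qed

lemma card_lehmer_codes: "card (lehmer_codes a b) = fact (nat (b - a + 1))"
proof -
  have "(\<Prod>j\<in>{a..a + int n - 1}. nat (j - a) + 1) = fact n" for n
  proof (induction n)
    case (Suc n)
    have "{a..a + int (Suc n) - 1} = insert (a + int n) {a..a + int n - 1}"
      by auto
    then show ?case
      using Suc by (simp add: algebra_simps)
  qed simp
  from this[of "nat (b - a + 1)"] show ?thesis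
    unfolding lehmer_codes_def by (cases "a \<le> b") (simp_all add: card_PiE)
qed

lemma bij_betw_lehmer_code:
  "bij_betw (lehmer_code {a..b}) {\<pi>. \<pi> permutes {a..b}} (lehmer_codes a b)"
proof -
  have "card (lehmer_code {a..b} ` {\<pi>. \<pi> permutes {a..b}}) = card (lehmer_codes a b)"
    using card_image[OF inj_on_lehmer_code] card_lehmer_codes by (simp add: card_permutations)
  moreover have "lehmer_code {a..b} ` {\<pi>. \<pi> permutes {a..b}} \<subseteq> lehmer_codes a b"
    using lehmer_code_in_lehmer_codes by blast
  moreover have "finite (lehmer_codes a b)"
    unfolding lehmer_codes_def by (intro finite_PiE) auto
  ultimately show ?thesis
    using inj_on_lehmer_code by (simp add: bij_betw_def card_subset_eq)
qed

subsection \<open>Cuts\<close>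

definition is_cut :: "int set \<Rightarrow> (int \<Rightarrow> int) \<Rightarrow> int \<Rightarrow> bool" where
  "is_cut A \<pi> s \<longleftrightarrow> (\<forall>x\<in>A. x < s \<longrightarrow> \<pi> x < s)"

definition blocked :: "int set \<Rightarrow> (int \<Rightarrow> nat) \<Rightarrow> int \<Rightarrow> bool" where
  "blocked A c s \<longleftrightarrow> (\<exists>j\<in>A. s \<le> j \<and> j - s < int (c j))"

lemma permutes_between_cuts:
  assumes p: "\<pi> permutes A" and A: "finite A"
    and cut1: "is_cut A \<pi> s1" and cut2: "is_cut A \<pi> s2"
  shows "\<pi> ` {s1..s2 - 1} \<subseteq> {s1..s2 - 1}"
proof (rule image_subsetI)
  fix x assume x: "x \<in> {s1..s2 - 1}"
  show "\<pi> x \<in> {s1..s2 - 1}"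
  proof (cases "x \<in> A")
    case False
    then show ?thesis using x p by (simp add: permutes_not_in)
  next
    case True
    define L where "L = {z\<in>A. z < s1}"
    have inj: "inj_on \<pi> L"
      using p by (rule permutes_inj_on)
    have "\<pi> ` L \<subseteq> L"
      using cut1 permutes_in_image[OF p] by (auto simp: is_cut_def L_def)
    then have "\<pi> ` L = L"
      using endo_inj_surj[OF _ _ inj] A by (simp add: L_def)
    moreover have "x \<notin> L"
      using x by (simp add: L_def)
    ultimately have "\<pi> x \<notin> L"
      by (metis inj_image_mem_iff permutes_inj[OF p])
    then have "s1 \<le> \<pi> x"
      using True permutes_in_image[OF p] by (auto simp: L_def)
    moreover have "\<pi> x < s2"
      using cut2 True x by (auto simp: is_cut_def)
    ultimately show ?thesis by simp
  qed
qed

lemma lehmer_code_eq_if_smaller_values_before: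
  assumes p: "\<pi> permutes {a..b}" and j: "j \<in> {a..b}"
    and before: "\<And>i. i \<in> {a..b} \<Longrightarrow> \<pi> i < \<pi> j \<Longrightarrow> i < j"
  shows "int (lehmer_code {a..b} \<pi> j) = j - \<pi> j"
proof -
  let ?A = "{a..b}"
  define S where "S = {i\<in>?A. i < j}"
  define T where "T = {i\<in>?A. \<pi> i < \<pi> j}"
  have finS: "finite S"
    unfolding S_def by (rule finite_subset[of _ ?A]) auto
  have TS: "T \<subseteq> S"
    using before by (auto simp: S_def T_def)
  have "{i\<in>?A. i < j \<and> \<pi> j < \<pi> i} = S - T"
  proof
    show "{i\<in>?A. i < j \<and> \<pi> j < \<pi> i} \<subseteq> S - T"
      by (auto simp: S_def T_def)
  next
    show "S - T \<subseteq> {i\<in>?A. i < j \<and> \<pi> j < \<pi> i}"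
    proof
      fix i assume i: "i \<in> S - T"
      then have "\<pi> i \<noteq> \<pi> j"
        using permutes_inj[OF p] by (auto simp: S_def inj_eq)
      with i show "i \<in> {i\<in>?A. i < j \<and> \<pi> j < \<pi> i}"
        by (auto simp: S_def T_def)
    qed
  qed
  then have "lehmer_code ?A \<pi> j = card (S - T)"
    using j by (simp add: lehmer_code_def)
  also have "\<dots> = card S - card T"
    by (rule card_Diff_subset[OF finite_subset[OF TS finS] TS])
  finally have "lehmer_code ?A \<pi> j = card S - card T" .
  moreover have "S = {a..j - 1}"
    using j by (auto simp: S_def)
  moreover have "\<pi> j \<in> ?A"
    using permutes_in_image[OF p] j by blast
  moreover have "card T = nat (\<pi> j - a)"
    unfolding T_def using card_less_permutes_interval[OF p] \<open>\<pi> j \<in> ?A\<close> by blast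
  moreover have "card T \<le> card S"
    by (rule card_mono[OF finS TS])
  ultimately show ?thesis
    using j by simp
qed

text \<open>Take \<open>j \<ge> s\<close> with the smallest value \<open>\<pi> j\<close>; it lies below \<open>s\<close>, and every position with
  a smaller value lies before \<open>j\<close>, so the code at \<open>j\<close> is \<open>j - \<pi> j > j - s\<close>.\<close>
lemma blocked_if_not_cut:
  assumes p: "\<pi> permutes {a..b}" and not_cut: "\<not> is_cut {a..b} \<pi> s"
  shows "blocked {a..b} (lehmer_code {a..b} \<pi>) s"
proof -
  let ?A = "{a..b}"
  define R where "R = {j\<in>?A. s \<le> j}"
  have inA: "\<pi> y \<in> ?A \<longleftrightarrow> y \<in> ?A" for y
    using permutes_in_image[OF p] by blast
  have finR: "finite R"
    unfolding R_def by (rule finite_subset[of _ ?A]) auto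
  obtain x where x: "x \<in> ?A" "x < s" "s \<le> \<pi> x"
    using not_cut by (auto simp: is_cut_def not_less)
  have "\<not> \<pi> ` R \<subseteq> R"
  proof
    assume "\<pi> ` R \<subseteq> R"
    then have "\<pi> ` R = R"
      using endo_inj_surj[OF finR] permutes_inj_on[OF p] by blast
    moreover have "\<pi> x \<in> R"
      using x inA[of x] by (auto simp: R_def)
    moreover have "x \<notin> R"
      using x by (simp add: R_def)
    ultimately show False
      by (metis inj_image_mem_iff permutes_inj[OF p])
  qed
  then obtain j0 where j0: "j0 \<in> R" "\<pi> j0 \<notin> R"
    by blast
  then have j0_less: "\<pi> j0 < s"
    using inA by (auto simp: R_def)
  define js where "js = arg_min_on \<pi> R"
  have js: "js \<in> R" "\<And>j. j \<in> R \<Longrightarrow> \<not> \<pi> j < \<pi> js"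
    using arg_min_if_finite[OF finR, of \<pi>] j0(1) unfolding js_def by blast+
  have js_less: "\<pi> js < s"
    using js(2)[OF j0(1)] j0_less by linarith
  have js_in: "js \<in> ?A" "s \<le> js"
    using js(1) by (auto simp: R_def)
  have "int (lehmer_code ?A \<pi> js) = js - \<pi> js"
  proof (rule lehmer_code_eq_if_smaller_values_before[OF p js_in(1)])
    fix i assume "i \<in> ?A" "\<pi> i < \<pi> js"
    then show "i < js"
      using js(2)[of i] js_in by (force simp: R_def)
  qed
  then show ?thesis
    using js_in js_less by (auto simp: blocked_def)
qed

subsection \<open>Finite products of discrete distributions\<close>

definition depends_only_on :: "'i set \<Rightarrow> (('i \<Rightarrow> 'a) \<Rightarrow> bool) \<Rightarrow> bool" where
  "depends_only_on B Q \<longleftrightarrow> (\<forall>c c'. (\<forall>j\<in>B. c j = c' j) \<longrightarrow> Q c = Q c')"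

lemma depends_only_on_Not: "depends_only_on B Q \<Longrightarrow> depends_only_on B (\<lambda>c. \<not> Q c)"
  by (simp add: depends_only_on_def)

lemma depends_only_on_all:
  "(\<And>k. P k \<Longrightarrow> depends_only_on B (Q k)) \<Longrightarrow> depends_only_on B (\<lambda>c. \<forall>k. P k \<longrightarrow> Q k c)"
  unfolding depends_only_on_def by blast

lemma sum_PiE_restrict_mult:
  fixes F G :: "('i \<Rightarrow> 'a) \<Rightarrow> real"
  assumes "B \<subseteq> I"
  shows "(\<Sum>c\<in>PiE I X. F (restrict c B) * G (restrict c (I - B))) =
         (\<Sum>u\<in>PiE B X. F u) * (\<Sum>v\<in>PiE (I - B) X. G v)"
proof -
  have "(\<Sum>u\<in>PiE B X. F u) * (\<Sum>v\<in>PiE (I - B) X. G v) =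
        (\<Sum>(u, v)\<in>PiE B X \<times> PiE (I - B) X. F u * G v)"
    by (simp add: sum_product sum.cartesian_product)
  also have "\<dots> = (\<Sum>c\<in>PiE I X. F (restrict c B) * G (restrict c (I - B)))"
  proof (rule sym, rule sum.reindex_bij_witness[of _ "\<lambda>(u, v) j. if j \<in> B then u j else v j"
        "\<lambda>c. (restrict c B, restrict c (I - B))"])
    fix c assume "c \<in> PiE I X"
    then show "(\<lambda>(u, v) j. if j \<in> B then u j else v j) (restrict c B, restrict c (I - B)) = c"
      and "(restrict c B, restrict c (I - B)) \<in> PiE B X \<times> PiE (I - B) X"
      using assms by (auto simp: PiE_def extensional_def fun_eq_iff)
  next
    fix uv assume "uv \<in> PiE B X \<times> PiE (I - B) X"
    moreover obtain u v where "uv = (u, v)"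
      by (cases uv)
    ultimately show "(\<lambda>c. (restrict c B, restrict c (I - B)))
        ((\<lambda>(u, v) j. if j \<in> B then u j else v j) uv) = uv"
      and "(\<lambda>(u, v) j. if j \<in> B then u j else v j) uv \<in> PiE I X"
      using assms by (auto simp: PiE_def extensional_def Pi_def fun_eq_iff)
  qed simp
  finally show ?thesis ..
qed

locale finite_product_weights =
  fixes I :: "'i set" and X :: "'i \<Rightarrow> 'a set" and w :: "'i \<Rightarrow> 'a \<Rightarrow> real"
  assumes finite_I: "finite I"
    and finite_X: "\<And>j. j \<in> I \<Longrightarrow> finite (X j)"
    and weight_nonneg: "\<And>j r. j \<in> I \<Longrightarrow> 0 \<le> w j r"
    and sum_weight: "\<And>j. j \<in> I \<Longrightarrow> sum (w j) (X j) = 1"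
begin

definition Pr :: "(('i \<Rightarrow> 'a) \<Rightarrow> bool) \<Rightarrow> real" where
  "Pr Q = (\<Sum>c\<in>PiE I X. of_bool (Q c) * (\<Prod>j\<in>I. w j (c j)))"

lemma sum_PiE_prod_weight:
  assumes "J \<subseteq> I"
  shows "(\<Sum>c\<in>PiE J X. \<Prod>j\<in>J. w j (c j)) = 1"
proof -
  have "finite J"
    using assms finite_I by (rule finite_subset)
  then have "(\<Sum>c\<in>PiE J X. \<Prod>j\<in>J. w j (c j)) = (\<Prod>j\<in>J. \<Sum>r\<in>X j. w j r)"
    using assms finite_X by (intro prod_sum_PiE[symmetric]) auto
  also have "\<dots> = 1"
    using assms sum_weight by (intro prod.neutral) auto
  finally show ?thesis .
qed

lemma Pr_nonneg: "0 \<le> Pr Q"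
  unfolding Pr_def using weight_nonneg by (intro sum_nonneg mult_nonneg_nonneg prod_nonneg) auto

lemma Pr_True: "Pr (\<lambda>_. True) = 1"
  using sum_PiE_prod_weight[of I] by (simp add: Pr_def)

lemma Pr_mono:
  assumes "\<And>c. c \<in> PiE I X \<Longrightarrow> Q c \<Longrightarrow> R c"
  shows "Pr Q \<le> Pr R"
  unfolding Pr_def using assms weight_nonneg
  by (intro sum_mono mult_right_mono prod_nonneg) auto

lemma Pr_disj_le: "Pr (\<lambda>c. Q c \<or> R c) \<le> Pr Q + Pr R"
proof -
  have "Pr (\<lambda>c. Q c \<or> R c) \<le> (\<Sum>c\<in>PiE I X. (of_bool (Q c) + of_bool (R c)) * (\<Prod>j\<in>I. w j (c j)))"
    unfolding Pr_def using weight_nonneg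
    by (intro sum_mono mult_right_mono prod_nonneg) auto
  also have "\<dots> = Pr Q + Pr R"
    by (simp add: Pr_def distrib_right sum.distrib)
  finally show ?thesis .
qed

lemma Pr_Bex_le:
  assumes "finite F"
  shows "Pr (\<lambda>c. \<exists>k\<in>F. Q k c) \<le> (\<Sum>k\<in>F. Pr (Q k))"
  using assms
proof (induction F rule: finite_induct)
  case empty
  then show ?case by (simp add: Pr_def)
next
  case (insert x F)
  have "Pr (\<lambda>c. \<exists>k\<in>insert x F. Q k c) \<le> Pr (Q x) + Pr (\<lambda>c. \<exists>k\<in>F. Q k c)"
    using Pr_disj_le[of "Q x"] by simp
  then show ?case
    using insert by simp
qed

lemma Pr_Not: "Pr (\<lambda>c. \<not> Q c) = 1 - Pr Q"
proof -
  have "Pr (\<lambda>c. \<not> Q c) + Pr Q = Pr (\<lambda>_. True)"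
    unfolding Pr_def by (subst sum.distrib[symmetric]) (intro sum.cong, auto)
  then show ?thesis
    using Pr_True by simp
qed

lemma Pr_le_1: "Pr Q \<le> 1"
  using Pr_Not[of Q] Pr_nonneg[of "\<lambda>c. \<not> Q c"] by simp

lemma Pr_coordinates:
  assumes "B \<subseteq> I"
  shows "Pr (\<lambda>c. \<forall>j\<in>B. c j \<in> S j) = (\<Prod>j\<in>B. \<Sum>r\<in>X j. of_bool (r \<in> S j) * w j r)"
proof -
  define g where "g j r = (if j \<in> B then of_bool (r \<in> S j) else (1::real))" for j r
  have "(\<Prod>j\<in>I. g j (c j)) = of_bool (\<forall>j\<in>B. c j \<in> S j)" for c
    using assms finite_I by (auto simp: g_def intro!: prod.neutral)
  then have "Pr (\<lambda>c. \<forall>j\<in>B. c j \<in> S j) = (\<Sum>c\<in>PiE I X. \<Prod>j\<in>I. g j (c j) * w j (c j))"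
    by (simp add: Pr_def prod.distrib)
  also have "\<dots> = (\<Prod>j\<in>I. \<Sum>r\<in>X j. g j r * w j r)"
    using finite_I finite_X by (intro prod_sum_PiE[symmetric]) auto
  also have "\<dots> = (\<Prod>j\<in>I - B. \<Sum>r\<in>X j. g j r * w j r) * (\<Prod>j\<in>B. \<Sum>r\<in>X j. g j r * w j r)"
    by (rule prod.subset_diff[OF assms finite_I])
  also have "(\<Prod>j\<in>I - B. \<Sum>r\<in>X j. g j r * w j r) = 1"
    using sum_weight by (intro prod.neutral) (auto simp: g_def)
  finally show ?thesis
    by (simp add: g_def)
qed

lemma Pr_conj_eq_mult_sums:
  assumes B: "B \<subseteq> I" and Q: "depends_only_on B Q" and R: "depends_only_on (I - B) R"
  shows "Pr (\<lambda>c. Q c \<and> R c) =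
    (\<Sum>u\<in>PiE B X. of_bool (Q u) * (\<Prod>j\<in>B. w j (u j))) *
    (\<Sum>v\<in>PiE (I - B) X. of_bool (R v) * (\<Prod>j\<in>I - B. w j (v j)))"
proof -
  define F where "F u = of_bool (Q u) * (\<Prod>j\<in>B. w j (u j))" for u
  define G where "G v = of_bool (R v) * (\<Prod>j\<in>I - B. w j (v j))" for v
  have "of_bool (Q c \<and> R c) * (\<Prod>j\<in>I. w j (c j)) = F (restrict c B) * G (restrict c (I - B))"
    for c
  proof -
    have "Q (restrict c B) = Q c" "R (restrict c (I - B)) = R c"
      using Q R by (simp_all add: depends_only_on_def)
    moreover have "(\<Prod>j\<in>I. w j (c j)) = (\<Prod>j\<in>I - B. w j (c j)) * (\<Prod>j\<in>B. w j (c j))"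
      by (rule prod.subset_diff[OF B finite_I])
    ultimately show ?thesis
      by (simp add: F_def G_def)
  qed
  then have "Pr (\<lambda>c. Q c \<and> R c) = (\<Sum>c\<in>PiE I X. F (restrict c B) * G (restrict c (I - B)))"
    by (simp add: Pr_def)
  also have "\<dots> = (\<Sum>u\<in>PiE B X. F u) * (\<Sum>v\<in>PiE (I - B) X. G v)"
    by (rule sum_PiE_restrict_mult[OF B])
  finally show ?thesis
    unfolding F_def G_def .
qed

lemma Pr_conj_independent:
  assumes "B \<subseteq> I" and "depends_only_on B Q" and "depends_only_on (I - B) R"
  shows "Pr (\<lambda>c. Q c \<and> R c) = Pr Q * Pr R"
proof -
  have triv: "depends_only_on B (\<lambda>_. True)" "depends_only_on (I - B) (\<lambda>_. True)"
    by (simp_all add: depends_only_on_def)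
  have "Pr Q = (\<Sum>u\<in>PiE B X. of_bool (Q u) * (\<Prod>j\<in>B. w j (u j)))"
    using Pr_conj_eq_mult_sums[OF assms(1,2) triv(2)] sum_PiE_prod_weight[of "I - B"] by simp
  moreover have "Pr R = (\<Sum>v\<in>PiE (I - B) X. of_bool (R v) * (\<Prod>j\<in>I - B. w j (v j)))"
    using Pr_conj_eq_mult_sums[OF assms(1) triv(1) assms(3)] sum_PiE_prod_weight[OF assms(1)] by simp
  ultimately show ?thesis
    using Pr_conj_eq_mult_sums[OF assms] by simp
qed

end

subsection \<open>Cuts are dense under geometric tails\<close>

lemma sum_power_le_geometric:
  fixes q :: real
  assumes "0 \<le> q" "q < 1" "finite D"
  shows "(\<Sum>d\<in>D. q ^ d) \<le> 1 / (1 - q)"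
proof -
  have "(\<Sum>d\<in>D. q ^ d) \<le> (\<Sum>d. q ^ d)"
    using assms by (intro sum_le_suminf summable_geometric) auto
  also have "\<dots> = 1 / (1 - q)"
    using assms by (intro suminf_geometric) auto
  finally show ?thesis .
qed

lemma prod_one_minus_power_ge_half:
  fixes q :: real
  assumes q: "0 \<le> q" "q < 1" and T: "q ^ T \<le> (1 - q) / 2"
    and D: "finite D" "\<And>d. d \<in> D \<Longrightarrow> T \<le> d"
  shows "1 / 2 \<le> (\<Prod>d\<in>D. 1 - q ^ (d + 1))"
proof -
  have "(\<Sum>d\<in>D. q ^ (d + 1)) \<le> (\<Sum>d\<in>D. q ^ T * q ^ (d - T))"
  proof (intro sum_mono)
    fix d assume "d \<in> D"
    then have "q ^ d = q ^ T * q ^ (d - T)"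
      using D(2) by (simp flip: power_add)
    then show "q ^ (d + 1) \<le> q ^ T * q ^ (d - T)"
      using q power_decreasing[of d "d + 1" q] by simp
  qed
  also have "\<dots> = q ^ T * (\<Sum>e\<in>(\<lambda>d. d - T) ` D. q ^ e)"
  proof -
    have "inj_on (\<lambda>d. d - T) D"
      by (intro inj_onI) (metis D(2) le_add_diff_inverse)
    then show ?thesis
      by (simp add: sum.reindex sum_distrib_left)
  qed
  also have "\<dots> \<le> q ^ T * (1 / (1 - q))"
    using q D by (intro mult_left_mono sum_power_le_geometric) auto
  also have "\<dots> \<le> 1 / 2"
    using T q by (simp add: field_simps)
  finally have "1 / 2 \<le> 1 - (\<Sum>d\<in>D. q ^ (d + 1))"
    by simp
  also have "\<dots> \<le> (\<Prod>d\<in>D. 1 - q ^ (d + 1))"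
    using q power_le_one[of q] by (intro Weierstrass_prod_ineq) (auto simp del: power_Suc)
  finally show ?thesis .
qed

text \<open>Split \<open>D\<close> at a threshold \<open>T\<close> with \<open>q ^ T \<le> (1 - q) / 2\<close>: the at most \<open>T\<close> small
  indices contribute at least \<open>(1 - q) ^ T\<close>, the large ones at least \<open>1/2\<close>.\<close>
lemma prod_one_minus_power_bounded_below:
  fixes q :: real
  assumes q: "0 \<le> q" "q < 1"
  shows "\<exists>p>0. \<forall>D. finite D \<longrightarrow> p \<le> (\<Prod>d\<in>D. 1 - q ^ (d + 1))"
proof -
  obtain T where T: "q ^ T < (1 - q) / 2"
    using real_arch_pow_inv[of "(1 - q) / 2" q] q by auto
  have factor: "0 \<le> 1 - q ^ (d + 1)" for d
    using q power_le_one[of q "d + 1"] by linarith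
  have "(1 - q) ^ T / 2 \<le> (\<Prod>d\<in>D. 1 - q ^ (d + 1))" if D: "finite D" for D
  proof -
    define D1 where "D1 = {d\<in>D. d < T}"
    have "(1 - q) ^ T \<le> (1 - q) ^ card D1"
    proof -
      have "card D1 \<le> card {..<T}"
        unfolding D1_def by (intro card_mono) auto
      then show ?thesis
        using q by (intro power_decreasing) auto
    qed
    also have "\<dots> = (\<Prod>d\<in>D1. 1 - q)"
      by simp
    also have "\<dots> \<le> (\<Prod>d\<in>D1. 1 - q ^ (d + 1))"
      using q power_decreasing[of 1 "d + 1" q for d] by (intro prod_mono) auto
    finally have small: "(1 - q) ^ T \<le> (\<Prod>d\<in>D1. 1 - q ^ (d + 1))" .
    have large: "1 / 2 \<le> (\<Prod>d\<in>D - D1. 1 - q ^ (d + 1))"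
      by (rule prod_one_minus_power_ge_half[where T = T]) (use q T D in \<open>auto simp: D1_def\<close>)
    have "(1 - q) ^ T / 2 \<le> (\<Prod>d\<in>D - D1. 1 - q ^ (d + 1)) * (\<Prod>d\<in>D1. 1 - q ^ (d + 1))"
      using mult_mono[OF large small] q factor by (simp add: prod_nonneg)
    also have "\<dots> = (\<Prod>d\<in>D. 1 - q ^ (d + 1))"
      by (rule prod.subset_diff[symmetric]) (auto simp: D1_def D)
    finally show ?thesis .
  qed
  moreover have "0 < (1 - q) ^ T / 2"
    using q by simp
  ultimately show ?thesis
    by blast
qed

lemma exists_block_parameters:
  fixes q p \<epsilon> :: real
  assumes q: "0 \<le> q" "q < 1" and p: "0 < p" "p \<le> 1" and \<epsilon>: "0 < \<epsilon>"
  shows "\<exists>M K. real M * (q ^ (K + 1) / (1 - q)) + (1 - p) ^ M \<le> \<epsilon>"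
proof -
  obtain M where M: "(1 - p) ^ M < \<epsilon> / 2"
    using real_arch_pow_inv[of "\<epsilon> / 2" "1 - p"] p \<epsilon> by auto
  obtain K where K: "q ^ K < \<epsilon> / 2 * (1 - q) / (real M + 1)"
    using real_arch_pow_inv[of "\<epsilon> / 2 * (1 - q) / (real M + 1)" q] q \<epsilon> by auto
  have "q ^ (K + 1) \<le> q ^ K"
    using q by (intro power_decreasing) auto
  then have "real M * (q ^ (K + 1) / (1 - q)) \<le> (real M + 1) * (q ^ K / (1 - q))"
    using q by (intro mult_mono divide_right_mono) auto
  also have "\<dots> < \<epsilon> / 2"
  proof -
    have "q ^ K * (real M + 1) < \<epsilon> / 2 * (1 - q)"
      using K by (simp add: pos_less_divide_eq algebra_simps)
    then show ?thesis
      using q by (simp add: pos_divide_less_eq mult.commute)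
  qed
  finally show ?thesis
    using M by (intro exI[of _ M] exI[of _ K]) linarith
qed

definition codes_below_on_block :: "int set \<Rightarrow> nat \<Rightarrow> int \<Rightarrow> (int \<Rightarrow> nat) \<Rightarrow> bool" where
  "codes_below_on_block A K s c \<longleftrightarrow> (\<forall>j\<in>A. s \<le> j \<and> j < s + int K \<longrightarrow> int (c j) \<le> j - s)"

lemma depends_only_on_codes_below_on_block:
  assumes "{j\<in>A. s \<le> j \<and> j < s + int K} \<subseteq> B"
  shows "depends_only_on B (codes_below_on_block A K s)"
  unfolding depends_only_on_def
proof (intro allI impI)
  fix c c' :: "int \<Rightarrow> nat" assume "\<forall>j\<in>B. c j = c' j"
  with assms have "\<forall>j\<in>A. s \<le> j \<and> j < s + int K \<longrightarrow> c j = c' j"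
    by auto
  then show "codes_below_on_block A K s c = codes_below_on_block A K s c'"
    by (auto simp: codes_below_on_block_def)
qed

locale geometric_tail_weights = finite_product_weights I X w
  for I :: "int set" and X :: "int \<Rightarrow> nat set" and w :: "int \<Rightarrow> nat \<Rightarrow> real" +
  fixes q :: real
  assumes q_nonneg: "0 \<le> q" and q_less_1: "q < 1"
    and tail: "\<And>j m. j \<in> I \<Longrightarrow> (\<Sum>r\<in>X j. of_bool (m < r) * w j r) \<le> q ^ (m + 1)"
begin

lemma Pr_code_greater: "j \<in> I \<Longrightarrow> Pr (\<lambda>c. m < c j) \<le> q ^ (m + 1)"
  using Pr_coordinates[of "{j}" "\<lambda>_. {r. m < r}"] tail[of j m] by simp

lemma sum_weight_at_most: "j \<in> I \<Longrightarrow> 1 - q ^ (m + 1) \<le> (\<Sum>r\<in>X j. of_bool (r \<le> m) * w j r)"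
proof -
  assume j: "j \<in> I"
  have "(\<Sum>r\<in>X j. of_bool (r \<le> m) * w j r) + (\<Sum>r\<in>X j. of_bool (m < r) * w j r) = sum (w j) (X j)"
    by (subst sum.distrib[symmetric]) (intro sum.cong, auto)
  then show ?thesis
    using sum_weight[OF j] tail[OF j, of m] by linarith
qed

lemma Pr_blocked_beyond:
  "Pr (\<lambda>c. \<exists>j\<in>I. s + int K \<le> j \<and> j - s < int (c j)) \<le> q ^ (K + 1) / (1 - q)"
proof -
  define J where "J = {j\<in>I. s + int K \<le> j}"
  have finJ: "finite J"
    using finite_I by (simp add: J_def)
  have "Pr (\<lambda>c. \<exists>j\<in>I. s + int K \<le> j \<and> j - s < int (c j)) = Pr (\<lambda>c. \<exists>j\<in>J. nat (j - s) < c j)"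
    unfolding Pr_def J_def by (intro sum.cong refl arg_cong2[where f = "(*)"]) auto
  also have "\<dots> \<le> (\<Sum>j\<in>J. Pr (\<lambda>c. nat (j - s) < c j))"
    by (rule Pr_Bex_le[OF finJ])
  also have "\<dots> \<le> (\<Sum>j\<in>J. q ^ (K + 1) * q ^ nat (j - s - int K))"
  proof (intro sum_mono)
    fix j assume j: "j \<in> J"
    then have "nat (j - s) + 1 = (K + 1) + nat (j - s - int K)"
      by (auto simp: J_def)
    then show "Pr (\<lambda>c. nat (j - s) < c j) \<le> q ^ (K + 1) * q ^ nat (j - s - int K)"
      using Pr_code_greater[of j "nat (j - s)"] j by (simp add: J_def power_add mult.assoc)
  qed
  also have "\<dots> = q ^ (K + 1) * (\<Sum>d\<in>(\<lambda>j. nat (j - s - int K)) ` J. q ^ d)"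
    by (subst sum.reindex) (auto simp: J_def inj_on_def sum_distrib_left)
  also have "\<dots> \<le> q ^ (K + 1) * (1 / (1 - q))"
    using q_nonneg q_less_1 finJ by (intro mult_left_mono sum_power_le_geometric) auto
  finally show ?thesis
    by simp
qed

lemma Pr_codes_below_on_block:
  assumes p: "\<forall>D. finite D \<longrightarrow> p \<le> (\<Prod>d\<in>D. 1 - q ^ (d + 1))"
  shows "p \<le> Pr (codes_below_on_block I K s)"
proof -
  define B where "B = {j\<in>I. s \<le> j \<and> j < s + int K}"
  have BI: "B \<subseteq> I"
    by (auto simp: B_def)
  have "Pr (codes_below_on_block I K s) = Pr (\<lambda>c. \<forall>j\<in>B. c j \<in> {r. r \<le> nat (j - s)})"
    unfolding Pr_def codes_below_on_block_def B_def
    by (intro sum.cong refl arg_cong2[where f = "(*)"]) auto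
  also have "\<dots> = (\<Prod>j\<in>B. \<Sum>r\<in>X j. of_bool (r \<le> nat (j - s)) * w j r)"
    using Pr_coordinates[OF BI, of "\<lambda>j. {r. r \<le> nat (j - s)}"] by simp
  finally have Pr_eq: "Pr (codes_below_on_block I K s) = \<dots>" .
  have "p \<le> (\<Prod>d\<in>(\<lambda>j. nat (j - s)) ` B. 1 - q ^ (d + 1))"
    using p finite_I BI by (meson finite_imageI finite_subset)
  also have "\<dots> = (\<Prod>j\<in>B. 1 - q ^ (nat (j - s) + 1))"
    by (subst prod.reindex) (auto simp: B_def inj_on_def)
  also have "\<dots> \<le> (\<Prod>j\<in>B. \<Sum>r\<in>X j. of_bool (r \<le> nat (j - s)) * w j r)"
    using BI sum_weight_at_most q_nonneg q_less_1 power_le_one[of q]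
    by (intro prod_mono conjI) (auto simp del: power_Suc)
  finally show ?thesis
    using Pr_eq by simp
qed

text \<open>Blocks \<open>[t + k K, t + (k + 1) K)\<close> for distinct \<open>k\<close> involve disjoint coordinates, so the
  events that the codes stay below the block fail independently.\<close>
lemma Pr_no_block_below:
  assumes p: "\<forall>D. finite D \<longrightarrow> p \<le> (\<Prod>d\<in>D. 1 - q ^ (d + 1))"
  shows "Pr (\<lambda>c. \<forall>k<M. \<not> codes_below_on_block I K (t + int (k * K)) c) \<le> (1 - p) ^ M"
proof (induction M)
  case 0
  then show ?case
    using Pr_True by simp
next
  case (Suc M)
  define B where "B = {j\<in>I. t + int (M * K) \<le> j \<and> j < t + int (M * K) + int K}"
  have BI: "B \<subseteq> I"
    by (auto simp: B_def)
  have dep_last: "depends_only_on B (\<lambda>c. \<not> codes_below_on_block I K (t + int (M * K)) c)"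
    by (intro depends_only_on_Not depends_only_on_codes_below_on_block) (auto simp: B_def)
  have "int (k * K) + int K \<le> int (M * K)" if "k < M" for k
  proof -
    have "k * K + K \<le> M * K"
      using that mult_le_mono1[of "Suc k" M K] by simp
    then show ?thesis
      by (metis of_nat_add of_nat_le_iff)
  qed
  then have dep_rest: "depends_only_on (I - B) (\<lambda>c. \<forall>k<M. \<not> codes_below_on_block I K (t + int (k * K)) c)"
    by (intro depends_only_on_all depends_only_on_Not depends_only_on_codes_below_on_block)
      (force simp: B_def)
  have "Pr (\<lambda>c. \<forall>k<Suc M. \<not> codes_below_on_block I K (t + int (k * K)) c) =
    Pr (\<lambda>c. \<not> codes_below_on_block I K (t + int (M * K)) c \<and>
            (\<forall>k<M. \<not> codes_below_on_block I K (t + int (k * K)) c))"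
    by (intro arg_cong[where f = Pr] ext) (auto simp: less_Suc_eq)
  also have "\<dots> = Pr (\<lambda>c. \<not> codes_below_on_block I K (t + int (M * K)) c) *
      Pr (\<lambda>c. \<forall>k<M. \<not> codes_below_on_block I K (t + int (k * K)) c)"
    by (rule Pr_conj_independent[OF BI dep_last dep_rest])
  also have "\<dots> \<le> (1 - p) * (1 - p) ^ M"
  proof -
    have "p \<le> 1"
      using Pr_codes_below_on_block[OF p] Pr_le_1 by (rule order_trans)
    then show ?thesis
      using Pr_Not Pr_nonneg Pr_codes_below_on_block[OF p] Suc.IH by (intro mult_mono) auto
  qed
  finally show ?case
    by simp
qed

text \<open>If no point of the window is a cut, then either some block has its codes below it,
  and the witness for its left end lies beyond the block, or no block does.\<close>
lemma Pr_blocked_window: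
  assumes p: "\<forall>D. finite D \<longrightarrow> p \<le> (\<Prod>d\<in>D. 1 - q ^ (d + 1))"
  shows "Pr (\<lambda>c. \<forall>s\<in>{t..t + int (M * K)}. blocked I c s)
    \<le> real M * (q ^ (K + 1) / (1 - q)) + (1 - p) ^ M"
proof -
  define Far where "Far k c \<longleftrightarrow> (\<exists>j\<in>I. (t + int (k * K)) + int K \<le> j \<and> j - (t + int (k * K)) < int (c j))"
    for k c
  have "(\<exists>k\<in>{..<M}. Far k c) \<or> (\<forall>k<M. \<not> codes_below_on_block I K (t + int (k * K)) c)"
    if blocked: "\<forall>s\<in>{t..t + int (M * K)}. blocked I c s" for c
  proof (rule disjCI)
    assume "\<not> (\<forall>k<M. \<not> codes_below_on_block I K (t + int (k * K)) c)"
    then obtain k where k: "k < M" "codes_below_on_block I K (t + int (k * K)) c"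
      by auto
    then have "int (k * K) \<le> int (M * K)"
      by (auto intro: mult_right_mono)
    then have "t + int (k * K) \<in> {t..t + int (M * K)}"
      unfolding atLeastAtMost_iff by linarith
    then obtain j where "j \<in> I" "t + int (k * K) \<le> j" "j - (t + int (k * K)) < int (c j)"
      using blocked unfolding blocked_def by blast
    with k have "Far k c"
      unfolding Far_def codes_below_on_block_def by (intro bexI[of _ j]) force+
    with k show "\<exists>k\<in>{..<M}. Far k c"
      by auto
  qed
  then have "Pr (\<lambda>c. \<forall>s\<in>{t..t + int (M * K)}. blocked I c s) \<le>
      Pr (\<lambda>c. (\<exists>k\<in>{..<M}. Far k c) \<or> (\<forall>k<M. \<not> codes_below_on_block I K (t + int (k * K)) c))"
    by (intro Pr_mono) auto
  also have "\<dots> \<le> Pr (\<lambda>c. \<exists>k\<in>{..<M}. Far k c) +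
      Pr (\<lambda>c. \<forall>k<M. \<not> codes_below_on_block I K (t + int (k * K)) c)"
    by (rule Pr_disj_le)
  also have "\<dots> \<le> (\<Sum>k\<in>{..<M}. Pr (Far k)) + (1 - p) ^ M"
    by (intro add_mono Pr_Bex_le Pr_no_block_below[OF p]) simp
  also have "(\<Sum>k\<in>{..<M}. Pr (Far k)) \<le> (\<Sum>k\<in>{..<M}. q ^ (K + 1) / (1 - q))"
    unfolding Far_def by (intro sum_mono Pr_blocked_beyond)
  finally show ?thesis
    by simp
qed

end

subsection \<open>Mallows permutations of an interval\<close>

lemma mallows_prob_nonneg: "0 \<le> q \<Longrightarrow> 0 \<le> mallows_prob q A \<pi>"
  unfolding mallows_prob_def by (intro divide_nonneg_nonneg sum_nonneg) auto

lemma sum_power_inversions_pos: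
  fixes q :: real
  assumes "0 < q" and "finite A"
  shows "0 < (\<Sum>p\<in>{p. p permutes A}. q ^ inversions A p)"
proof (rule sum_pos)
  show "finite {p. p permutes A}"
    using assms(2) by (rule finite_permutations)
  show "{p. p permutes A} \<noteq> {}"
    using permutes_id by blast
qed (use assms(1) in auto)

lemma mallows_prob_pos:
  assumes "0 < q" and "finite A" and "\<pi> permutes A"
  shows "0 < mallows_prob q A \<pi>"
  using sum_power_inversions_pos[OF assms(1,2)] assms(1) by (simp add: mallows_prob_def)

lemma sum_mallows_prob:
  assumes "0 < q" and "finite A"
  shows "(\<Sum>\<pi>\<in>{\<pi>. \<pi> permutes A}. mallows_prob q A \<pi>) = 1"
  using sum_power_inversions_pos[OF assms]
  by (simp add: mallows_prob_def flip: sum_divide_distrib)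

definition code_weight :: "real \<Rightarrow> int \<Rightarrow> int \<Rightarrow> nat \<Rightarrow> real" where
  "code_weight q a j r = q ^ r / (\<Sum>k\<in>{0..nat (j - a)}. q ^ k)"

lemma sum_power_atLeast0AtMost_ge_1: "0 \<le> q \<Longrightarrow> 1 \<le> (\<Sum>k\<in>{0..n}. (q::real) ^ k)"
  using member_le_sum[of 0 "{0..n}" "\<lambda>k. q ^ k"] by simp

lemma geometric_tail_weights_code_weight:
  assumes q: "0 < q" "q < 1"
  shows "geometric_tail_weights {a..b} (\<lambda>j. {0..nat (j - a)}) (code_weight q a) q"
proof
  fix j m
  define n where "n = nat (j - a)"
  define Z where "Z = (\<Sum>k\<in>{0..n}. q ^ k)"
  have Z: "1 \<le> Z"
    using q by (simp add: Z_def sum_power_atLeast0AtMost_ge_1)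
  show "sum (code_weight q a j) {0..nat (j - a)} = 1"
    using Z by (simp add: code_weight_def Z_def n_def flip: sum_divide_distrib)
  show "0 \<le> code_weight q a j r" for r
    using q Z by (simp add: code_weight_def Z_def n_def)
  have "(\<Sum>r\<in>{0..n}. of_bool (m < r) * q ^ r) = (\<Sum>r\<in>{r\<in>{0..n}. m < r}. q ^ r)"
    by (simp add: sum.inter_restrict Collect_conj_eq atLeast0AtMost atMost_def)
  also have "\<dots> = (\<Sum>r\<in>{r\<in>{0..n}. m < r}. q ^ (m + 1) * q ^ (r - (m + 1)))"
  proof (intro sum.cong refl)
    fix r assume "r \<in> {r\<in>{0..n}. m < r}"
    then have "r = (m + 1) + (r - (m + 1))"
      by auto
    then show "q ^ r = q ^ (m + 1) * q ^ (r - (m + 1))"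
      by (metis power_add)
  qed
  also have "\<dots> = q ^ (m + 1) * (\<Sum>e\<in>(\<lambda>r. r - (m + 1)) ` {r\<in>{0..n}. m < r}. q ^ e)"
    by (subst sum.reindex) (auto simp: inj_on_def sum_distrib_left)
  also have "\<dots> \<le> q ^ (m + 1) * Z"
    unfolding Z_def using q by (intro mult_left_mono sum_mono2) auto
  finally have "(\<Sum>r\<in>{0..n}. of_bool (m < r) * q ^ r) \<le> q ^ (m + 1) * Z" .
  then show "(\<Sum>r\<in>{0..nat (j - a)}. of_bool (m < r) * code_weight q a j r) \<le> q ^ (m + 1)"
    using Z by (simp add: code_weight_def Z_def n_def pos_divide_le_eq flip: sum_divide_distrib)
qed (use q in auto)

text \<open>Since the number of inversions is the sum of the Lehmer code, the Mallows weight
  factorises over the code: the codes of a Mallows permutation are independent truncated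
  geometric variables.\<close>
lemma sum_mallows_prob_lehmer_code:
  assumes q: "0 < q" "q < 1"
  shows "(\<Sum>\<pi>\<in>{\<pi>. \<pi> permutes {a..b}}. of_bool (Q (lehmer_code {a..b} \<pi>)) * mallows_prob q {a..b} \<pi>)
    = finite_product_weights.Pr {a..b} (\<lambda>j. {0..nat (j - a)}) (code_weight q a) Q"
proof -
  interpret W: geometric_tail_weights "{a..b}" "\<lambda>j. {0..nat (j - a)}" "code_weight q a" q
    using q by (rule geometric_tail_weights_code_weight)
  define Z where "Z = (\<Prod>j\<in>{a..b}. \<Sum>k\<in>{0..nat (j - a)}. q ^ k)"
  have Z_pos: "0 < Z"
    unfolding Z_def using q sum_power_atLeast0AtMost_ge_1
    by (intro prod_pos) (auto intro: less_le_trans[of 0 1])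
  have weight: "q ^ (\<Sum>j\<in>{a..b}. c j) = (\<Prod>j\<in>{a..b}. code_weight q a j (c j)) * Z" for c
  proof -
    have "(\<Sum>k\<in>{0..n}. q ^ k) \<noteq> 0" for n
      using sum_power_atLeast0AtMost_ge_1[of q n] q by linarith
    then have "q ^ (\<Sum>j\<in>{a..b}. c j) =
        (\<Prod>j\<in>{a..b}. code_weight q a j (c j) * (\<Sum>k\<in>{0..nat (j - a)}. q ^ k))"
      unfolding power_sum by (intro prod.cong refl) (simp add: code_weight_def)
    then show ?thesis
      by (simp add: Z_def prod.distrib)
  qed
  have code_sum: "(\<Sum>\<pi>\<in>{\<pi>. \<pi> permutes {a..b}}. of_bool (R (lehmer_code {a..b} \<pi>)) * q ^ inversions {a..b} \<pi>)
      = W.Pr R * Z" for R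
  proof -
    have "(\<Sum>\<pi>\<in>{\<pi>. \<pi> permutes {a..b}}. of_bool (R (lehmer_code {a..b} \<pi>)) * q ^ inversions {a..b} \<pi>)
        = (\<Sum>\<pi>\<in>{\<pi>. \<pi> permutes {a..b}}. (\<lambda>c. of_bool (R c) * q ^ (\<Sum>j\<in>{a..b}. c j)) (lehmer_code {a..b} \<pi>))"
      by (simp add: inversions_eq_sum_lehmer_code)
    also have "\<dots> = (\<Sum>c\<in>lehmer_codes a b. of_bool (R c) * q ^ (\<Sum>j\<in>{a..b}. c j))"
      by (rule sum.reindex_bij_betw[OF bij_betw_lehmer_code])
    also have "\<dots> = W.Pr R * Z"
      by (simp add: weight W.Pr_def lehmer_codes_def sum_distrib_right mult.assoc)
    finally show ?thesis .
  qed
  have "(\<Sum>p\<in>{p. p permutes {a..b}}. q ^ inversions {a..b} p) = Z"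
    using code_sum[of "\<lambda>_. True"] W.Pr_True by simp
  then show ?thesis
    using code_sum[of Q] Z_pos by (simp add: mallows_prob_def flip: sum_divide_distrib)
qed

subsection \<open>Invariant intervals\<close>

definition invariant_interval_near :: "int \<Rightarrow> nat \<Rightarrow> (int \<Rightarrow> int) \<Rightarrow> bool" where
  "invariant_interval_near i N \<pi> \<longleftrightarrow>
     (\<exists>m k. i - int N \<le> m \<and> m \<le> i \<and> i \<le> k \<and> k \<le> i + int N \<and> \<pi> ` {m..k} \<subseteq> {m..k})"

lemma blocked_window_if_no_invariant_interval:
  assumes p: "\<pi> permutes {a..b}" and no_inv: "\<not> invariant_interval_near i N \<pi>"
  shows "(\<forall>s\<in>{i - int N..i}. blocked {a..b} (lehmer_code {a..b} \<pi>) s) \<or>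
    (\<forall>s\<in>{i + 1..i + 1 + int N}. blocked {a..b} (lehmer_code {a..b} \<pi>) s)"
proof (rule ccontr)
  assume "\<not> ?thesis"
  then obtain s1 s2 where s: "s1 \<in> {i - int N..i}" "s2 \<in> {i + 1..i + 1 + int N}"
    and "\<not> blocked {a..b} (lehmer_code {a..b} \<pi>) s1" "\<not> blocked {a..b} (lehmer_code {a..b} \<pi>) s2"
    by blast
  then have "is_cut {a..b} \<pi> s1" "is_cut {a..b} \<pi> s2"
    using blocked_if_not_cut[OF p] by blast+
  then have "\<pi> ` {s1..s2 - 1} \<subseteq> {s1..s2 - 1}"
    using p by (intro permutes_between_cuts) auto
  with s have "invariant_interval_near i N \<pi>"
    unfolding invariant_interval_near_def by (intro exI[of _ s1] exI[of _ "s2 - 1"]) auto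
  with no_inv show False ..
qed

lemma mallows_no_invariant_interval_small:
  assumes q: "0 < q" "q < 1" and \<epsilon>: "0 < \<epsilon>"
  shows "\<exists>N. \<forall>a b i. (\<Sum>\<pi>\<in>{\<pi>. \<pi> permutes {a..b}}.
      of_bool (\<not> invariant_interval_near i N \<pi>) * mallows_prob q {a..b} \<pi>) \<le> \<epsilon>"
proof -
  obtain p where p: "0 < p" "\<forall>D. finite D \<longrightarrow> p \<le> (\<Prod>d\<in>D. 1 - q ^ (d + 1))"
    using prod_one_minus_power_bounded_below q by (meson less_imp_le)
  then have "p \<le> 1"
    by (metis finite.emptyI prod.empty)
  then obtain M K where MK: "real M * (q ^ (K + 1) / (1 - q)) + (1 - p) ^ M \<le> \<epsilon> / 2"
    using exists_block_parameters[of q p "\<epsilon> / 2"] q p \<epsilon> by auto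
  have "(\<Sum>\<pi>\<in>{\<pi>. \<pi> permutes {a..b}}.
      of_bool (\<not> invariant_interval_near i (M * K) \<pi>) * mallows_prob q {a..b} \<pi>) \<le> \<epsilon>" for a b i
  proof -
    interpret W: geometric_tail_weights "{a..b}" "\<lambda>j. {0..nat (j - a)}" "code_weight q a" q
      using q by (rule geometric_tail_weights_code_weight)
    define Left where "Left c \<longleftrightarrow> (\<forall>s\<in>{i - int (M * K)..i - int (M * K) + int (M * K)}. blocked {a..b} c s)"
      for c
    define Right where "Right c \<longleftrightarrow> (\<forall>s\<in>{i + 1..i + 1 + int (M * K)}. blocked {a..b} c s)" for c
    have "(\<Sum>\<pi>\<in>{\<pi>. \<pi> permutes {a..b}}.
        of_bool (\<not> invariant_interval_near i (M * K) \<pi>) * mallows_prob q {a..b} \<pi>) \<le>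
      (\<Sum>\<pi>\<in>{\<pi>. \<pi> permutes {a..b}}.
        of_bool ((\<lambda>c. Left c \<or> Right c) (lehmer_code {a..b} \<pi>)) * mallows_prob q {a..b} \<pi>)"
    proof (intro sum_mono mult_right_mono mallows_prob_nonneg)
      fix \<pi> assume "\<pi> \<in> {\<pi>. \<pi> permutes {a..b}}"
      then show "of_bool (\<not> invariant_interval_near i (M * K) \<pi>)
          \<le> (of_bool ((\<lambda>c. Left c \<or> Right c) (lehmer_code {a..b} \<pi>)) :: real)"
        using blocked_window_if_no_invariant_interval[of \<pi> a b i "M * K"]
        by (auto simp: Left_def Right_def)
    qed (use q in auto)
    also have "\<dots> = W.Pr (\<lambda>c. Left c \<or> Right c)"
      using q by (rule sum_mallows_prob_lehmer_code)
    also have "\<dots> \<le> W.Pr Left + W.Pr Right"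
      by (rule W.Pr_disj_le)
    also have "\<dots> \<le> \<epsilon> / 2 + \<epsilon> / 2"
      using W.Pr_blocked_window[OF p(2), of _ M K] MK unfolding Left_def Right_def
      by (intro add_mono) (meson order_trans)+
    finally show ?thesis
      by simp
  qed
  then show ?thesis
    by blast
qed

lemma finite_orbit_Z_if_invariant:
  assumes "bij \<sigma>" and J: "finite J" "\<sigma> ` J \<subseteq> J" and "i \<in> J"
  shows "finite (orbit_Z \<sigma> i)"
proof -
  have inj: "inj \<sigma>"
    using assms(1) by (rule bij_is_inj)
  then have "\<sigma> ` J = J"
    using endo_inj_surj[OF J] by (simp add: inj_on_subset)
  then have "inv \<sigma> ` J \<subseteq> J"
    using inj by (metis image_inv_f_f subset_refl)
  then have "(\<sigma> ^^ n) i \<in> J" "(inv \<sigma> ^^ n) i \<in> J" for n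
    using J(2) \<open>i \<in> J\<close> by (induction n) auto
  then have "orbit_Z \<sigma> i \<subseteq> J"
    by (auto simp: orbit_Z_def)
  then show ?thesis
    using J(1) by (rule finite_subset)
qed

subsection \<open>The bi-infinite Mallows measure\<close>

lemma eventually_sequentially_in_iff:
  "(\<forall>\<^sub>F n in sequentially. x \<in> A n) \<longleftrightarrow> x \<in> (\<Union>n0. \<Inter>n. A (n0 + n))"
  unfolding eventually_sequentially
proof
  assume "\<exists>N. \<forall>n\<ge>N. x \<in> A n"
  then obtain N where "\<forall>n\<ge>N. x \<in> A n"
    by blast
  then show "x \<in> (\<Union>n0. \<Inter>n. A (n0 + n))"
    by (intro UN_I[of N]) auto
next
  assume "x \<in> (\<Union>n0. \<Inter>n. A (n0 + n))"
  then obtain n0 where "\<forall>n. x \<in> A (n0 + n)"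
    by blast
  then show "\<exists>N. \<forall>n\<ge>N. x \<in> A n"
    by (metis le_add_diff_inverse)
qed

lemma (in finite_measure) measure_eventually_in_le:
  assumes A: "\<And>n. A n \<in> sets M" and le: "\<And>n. measure M (A n) \<le> \<epsilon>"
  shows "measure M {x\<in>space M. \<forall>\<^sub>F n in sequentially. x \<in> A n} \<le> \<epsilon>"
proof -
  define B where "B n0 = (\<Inter>n. A (n0 + n))" for n0
  have B: "range B \<subseteq> sets M"
    using A by (auto simp: B_def)
  have B_sub: "B n0 \<subseteq> A n0" for n0
    using INT_lower[of 0 UNIV "\<lambda>n. A (n0 + n)"] by (simp add: B_def)
  have "B m \<subseteq> B n" if "m \<le> n" for m n
  proof (unfold B_def, rule INT_greatest)
    fix k
    have "(\<Inter>i. A (m + i)) \<subseteq> A (m + (n - m + k))"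
      by (rule INT_lower) simp
    then show "(\<Inter>i. A (m + i)) \<subseteq> A (n + k)"
      using that by simp
  qed
  then have lim: "(\<lambda>n0. measure M (B n0)) \<longlonglongrightarrow> measure M (\<Union>n0. B n0)"
    using B by (intro finite_Lim_measure_incseq) (auto simp: incseq_def)
  have "measure M (B n0) \<le> \<epsilon>" for n0
    using finite_measure_mono[OF B_sub A] le order_trans by blast
  then have "measure M (\<Union>n0. B n0) \<le> \<epsilon>"
    using LIMSEQ_le_const2[OF lim] by blast
  moreover have "(\<forall>\<^sub>F n in sequentially. x \<in> A n) \<longleftrightarrow> x \<in> (\<Union>n0. B n0)" for x
    unfolding B_def by (rule eventually_sequentially_in_iff)
  then have "{x\<in>space M. \<forall>\<^sub>F n in sequentially. x \<in> A n} = (\<Union>n0. B n0)"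
    using B_sub sets.sets_into_space[OF A] by blast
  ultimately show ?thesis
    by simp
qed

lemma (in finite_measure) null_sets_all_eventually_in:
  fixes A :: "nat \<Rightarrow> nat \<Rightarrow> 'a set"
  assumes A: "\<And>N n. A N n \<in> sets M"
    and small: "\<And>\<epsilon>. 0 < \<epsilon> \<Longrightarrow> \<exists>N. \<forall>n. measure M (A N n) \<le> \<epsilon>"
  shows "{x\<in>space M. \<forall>N. \<forall>\<^sub>F n in sequentially. x \<in> A N n} \<in> null_sets M"
proof -
  define E where "E N = {x\<in>space M. \<forall>\<^sub>F n in sequentially. x \<in> A N n}" for N
  have E: "E N \<in> sets M" for N
    unfolding E_def using A by (intro sets_Collect_eventually_sequentially) simp
  have set_eq: "{x\<in>space M. \<forall>N. \<forall>\<^sub>F n in sequentially. x \<in> A N n} = (\<Inter>N. E N)"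
    by (auto simp: E_def)
  have INT_sets: "(\<Inter>N. E N) \<in> sets M"
    using E by auto
  have "measure M (\<Inter>N. E N) \<le> 0 + \<epsilon>" if \<epsilon>: "0 < \<epsilon>" for \<epsilon>
  proof -
    obtain N where "\<forall>n. measure M (A N n) \<le> \<epsilon>"
      using small[OF \<epsilon>] by blast
    then have "measure M (E N) \<le> \<epsilon>"
      unfolding E_def using A by (intro measure_eventually_in_le) auto
    moreover have "measure M (\<Inter>N. E N) \<le> measure M (E N)"
      by (intro finite_measure_mono E) auto
    ultimately show ?thesis
      by simp
  qed
  then have "measure M (\<Inter>N. E N) = 0"
    using measure_nonneg[of M "\<Inter>N. E N"] by (metis antisym field_le_epsilon)
  with INT_sets show ?thesis
    unfolding set_eq by (simp add: null_sets_def emeasure_eq_measure)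
qed

text \<open>Measurability of pattern events is not part of \<open>mallows_Z\<close>; it follows because they have
  positive measure, while \<open>measure\<close> vanishes on non-measurable sets.\<close>
lemma mallows_Z_pattern_event:
  fixes q :: real
  assumes P: "mallows_Z q P" and q: "0 < q" and G: "G \<subseteq> {\<pi>. \<pi> permutes {a..b}}"
  shows "{\<sigma>\<in>space P. pattern \<sigma> {a..b} \<in> G} \<in> sets P"
    and "measure P {\<sigma>\<in>space P. pattern \<sigma> {a..b} \<in> G} = (\<Sum>\<pi>\<in>G. mallows_prob q {a..b} \<pi>)"
proof -
  interpret prob_space P
    using P by (simp add: mallows_Z_def)
  define S where "S \<pi> = {\<sigma>\<in>space P. pattern \<sigma> {a..b} = \<pi>}" for \<pi>
  have S_measure: "measure P (S \<pi>) = mallows_prob q {a..b} \<pi>" if "\<pi> \<in> G" for \<pi>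
    using P that G by (auto simp: mallows_Z_def S_def)
  have S_sets: "S \<pi> \<in> sets P" if "\<pi> \<in> G" for \<pi>
    using S_measure[OF that] mallows_prob_pos[OF q, of "{a..b}" \<pi>] that G measure_notin_sets
    by fastforce
  have finG: "finite G"
    using G finite_permutations[of "{a..b}"] by (auto intro: finite_subset)
  have eq: "{\<sigma>\<in>space P. pattern \<sigma> {a..b} \<in> G} = (\<Union>\<pi>\<in>G. S \<pi>)"
    by (auto simp: S_def)
  show "{\<sigma>\<in>space P. pattern \<sigma> {a..b} \<in> G} \<in> sets P"
    unfolding eq using finG S_sets by blast
  have "measure P (\<Union>\<pi>\<in>G. S \<pi>) = (\<Sum>\<pi>\<in>G. measure P (S \<pi>))"
    using finG S_sets by (intro finite_measure_finite_Union) (auto simp: disjoint_family_on_def S_def)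
  then show "measure P {\<sigma>\<in>space P. pattern \<sigma> {a..b} \<in> G} = (\<Sum>\<pi>\<in>G. mallows_prob q {a..b} \<pi>)"
    unfolding eq using S_measure by simp
qed

lemma mallows_Z_measure_pattern_outside:
  fixes q :: real
  assumes P: "mallows_Z q P" and q: "0 < q"
  shows "measure P (space P - {\<sigma>\<in>space P. pattern \<sigma> {a..b} \<in> {\<pi>. \<pi> permutes {a..b} \<and> R \<pi>}}) =
    (\<Sum>\<pi>\<in>{\<pi>. \<pi> permutes {a..b}}. of_bool (\<not> R \<pi>) * mallows_prob q {a..b} \<pi>)"
proof -
  interpret prob_space P
    using P by (simp add: mallows_Z_def)
  let ?Perm = "{\<pi>. \<pi> permutes {a..b}}"
  let ?event = "{\<sigma>\<in>space P. pattern \<sigma> {a..b} \<in> {\<pi>. \<pi> permutes {a..b} \<and> R \<pi>}}"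
  have fin: "finite ?Perm"
    by (simp add: finite_permutations)
  have "measure P (space P - ?event) = 1 - measure P ?event"
    by (intro prob_compl mallows_Z_pattern_event(1)[OF P q]) auto
  also have "measure P ?event = (\<Sum>\<pi>\<in>{\<pi>. \<pi> permutes {a..b} \<and> R \<pi>}. mallows_prob q {a..b} \<pi>)"
    by (rule mallows_Z_pattern_event(2)[OF P q]) auto
  also have "\<dots> = (\<Sum>\<pi>\<in>{\<pi>\<in>?Perm. R \<pi>}. mallows_prob q {a..b} \<pi>)"
    by simp
  also have "\<dots> = (\<Sum>\<pi>\<in>?Perm. of_bool (R \<pi>) * mallows_prob q {a..b} \<pi>)"
    unfolding sum.inter_filter[OF fin] by (intro sum.cong) auto
  also have "1 = (\<Sum>\<pi>\<in>?Perm. mallows_prob q {a..b} \<pi>)"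
    using sum_mallows_prob[OF q] by simp
  finally have "measure P (space P - ?event) =
      (\<Sum>\<pi>\<in>?Perm. mallows_prob q {a..b} \<pi> - of_bool (R \<pi>) * mallows_prob q {a..b} \<pi>)"
    by (simp only: sum_subtractf)
  also have "\<dots> = (\<Sum>\<pi>\<in>?Perm. of_bool (\<not> R \<pi>) * mallows_prob q {a..b} \<pi>)"
    by (intro sum.cong) auto
  finally show ?thesis .
qed

lemma AE_frequently_invariant_interval_near:
  fixes q :: real
  assumes P: "mallows_Z q P" and q: "0 < q" "q < 1"
  shows "AE \<sigma> in P. \<forall>i. \<exists>N. \<exists>\<^sub>F n in sequentially.
    invariant_interval_near i N (pattern \<sigma> {- int n..int n})"
proof -
  interpret prob_space P
    using P by (simp add: mallows_Z_def)
  define Bad where "Bad i N n = space P - {\<sigma>\<in>space P. pattern \<sigma> {- int n..int n} \<in>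
      {\<pi>. \<pi> permutes {- int n..int n} \<and> invariant_interval_near i N \<pi>}}" for i N n
  have Bad_sets: "Bad i N n \<in> sets P" for i N n
    unfolding Bad_def by (intro sets.compl_sets mallows_Z_pattern_event(1)[OF P q(1)]) auto
  have small: "\<exists>N. \<forall>n. measure P (Bad i N n) \<le> \<epsilon>" if \<epsilon>: "0 < \<epsilon>" for i \<epsilon>
  proof -
    obtain N where "\<forall>a b i. (\<Sum>\<pi>\<in>{\<pi>. \<pi> permutes {a..b}}.
        of_bool (\<not> invariant_interval_near i N \<pi>) * mallows_prob q {a..b} \<pi>) \<le> \<epsilon>"
      using mallows_no_invariant_interval_small[OF q \<epsilon>] by blast
    then show ?thesis
      unfolding Bad_def mallows_Z_measure_pattern_outside[OF P q(1)] by blast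
  qed
  have null: "{\<sigma>\<in>space P. \<forall>N. \<forall>\<^sub>F n in sequentially. \<sigma> \<in> Bad i N n} \<in> null_sets P" for i
    using Bad_sets small by (rule null_sets_all_eventually_in)
  show ?thesis
  proof (rule AE_I')
    show "(\<Union>i. {\<sigma>\<in>space P. \<forall>N. \<forall>\<^sub>F n in sequentially. \<sigma> \<in> Bad i N n}) \<in> null_sets P"
      using null by (intro null_sets_UN') auto
    show "{\<sigma>\<in>space P. \<not> (\<forall>i. \<exists>N. \<exists>\<^sub>F n in sequentially.
        invariant_interval_near i N (pattern \<sigma> {- int n..int n}))}
      \<subseteq> (\<Union>i. {\<sigma>\<in>space P. \<forall>N. \<forall>\<^sub>F n in sequentially. \<sigma> \<in> Bad i N n})"
    proof
      fix \<sigma> assume \<sigma>: "\<sigma> \<in> {\<sigma>\<in>space P. \<not> (\<forall>i. \<exists>N. \<exists>\<^sub>F n in sequentially.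
          invariant_interval_near i N (pattern \<sigma> {- int n..int n}))}"
      then obtain i where
        "\<forall>N. \<forall>\<^sub>F n in sequentially. \<not> invariant_interval_near i N (pattern \<sigma> {- int n..int n})"
        by (auto simp: not_frequently)
      then have "\<forall>N. \<forall>\<^sub>F n in sequentially. \<sigma> \<in> Bad i N n"
        using \<sigma> by (auto simp: Bad_def elim: eventually_mono)
      with \<sigma> show "\<sigma> \<in> (\<Union>i. {\<sigma>\<in>space P. \<forall>N. \<forall>\<^sub>F n in sequentially. \<sigma> \<in> Bad i N n})"
        by blast
    qed
  qed
qed

lemma eventually_pattern_no_invariant_interval:
  assumes "bij \<sigma>" and conv: "\<forall>i. \<exists>N::nat. \<forall>n\<ge>N. pattern \<sigma> {- int n..int n} i = \<sigma> i"
    and infinite: "infinite (orbit_Z \<sigma> i)"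
  shows "\<forall>\<^sub>F n in sequentially. \<not> invariant_interval_near i N (pattern \<sigma> {- int n..int n})"
proof -
  have "\<forall>\<^sub>F n in sequentially. \<forall>x\<in>{i - int N..i + int N}. pattern \<sigma> {- int n..int n} x = \<sigma> x"
    using conv by (intro eventually_ball_finite) (auto simp: eventually_sequentially)
  then show ?thesis
  proof (rule eventually_mono)
    fix n assume agree: "\<forall>x\<in>{i - int N..i + int N}. pattern \<sigma> {- int n..int n} x = \<sigma> x"
    show "\<not> invariant_interval_near i N (pattern \<sigma> {- int n..int n})"
    proof
      assume "invariant_interval_near i N (pattern \<sigma> {- int n..int n})"
      then obtain m k where mk: "i - int N \<le> m" "m \<le> i" "i \<le> k" "k \<le> i + int N"
        and inv: "pattern \<sigma> {- int n..int n} ` {m..k} \<subseteq> {m..k}"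
        unfolding invariant_interval_near_def by blast
      have "\<sigma> ` {m..k} \<subseteq> {m..k}"
        using inv agree mk by (auto simp: image_subset_iff)
      then have "finite (orbit_Z \<sigma> i)"
        using \<open>bij \<sigma>\<close> mk by (intro finite_orbit_Z_if_invariant) auto
      with infinite show False ..
    qed
  qed
qed

theorem lemma5p2:
  fixes q :: real and P :: "(int \<Rightarrow> int) measure"
  assumes "0 < q" and "q < 1" and "mallows_Z q P"
  shows "AE \<sigma> in P. \<forall>i. finite (orbit_Z \<sigma> i)"
proof -
  have bij: "AE \<sigma> in P. bij \<sigma>"
    and conv: "AE \<sigma> in P. \<forall>i. \<exists>N::nat. \<forall>n\<ge>N. pattern \<sigma> {- int n..int n} i = \<sigma> i"
    using assms(3) by (simp_all add: mallows_Z_def)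
  from AE_frequently_invariant_interval_near[OF assms(3,1,2)] bij conv
  show ?thesis
  proof eventually_elim
    case (elim \<sigma>)
    show "\<forall>i. finite (orbit_Z \<sigma> i)"
    proof (rule allI, rule ccontr)
      fix i assume "infinite (orbit_Z \<sigma> i)"
      obtain N where "\<exists>\<^sub>F n in sequentially. invariant_interval_near i N (pattern \<sigma> {- int n..int n})"
        using elim(1) by blast
      moreover have "\<forall>\<^sub>F n in sequentially. \<not> invariant_interval_near i N (pattern \<sigma> {- int n..int n})"
        using elim(2,3) \<open>infinite (orbit_Z \<sigma> i)\<close> by (rule eventually_pattern_no_invariant_interval)
      ultimately show False
        by (simp add: frequently_def)
    qed
  qed
qed

end
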